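(* For $\alpha\in Y^*$ let $\tau^-(\alpha)$ be the lowest eigenvalue of $T$ on $W^\alpha_3$. Suppose there is $\theta>0$, independent of $\alpha\in Y^*$, such that for every $\alpha\in Y^*$ and every $v\in W^\alpha_3$, $$\int_{Y\setminus D}\mathbf C^1\mathcal E(v):\overline{\mathcal E(v)}\,dx\ge\theta\int_D\mathbf C^1\mathcal E(v):\overline{\mathcal E(v)}\,dx.$$ Let $p=\min\{\frac12,\frac\theta2\}$. Then $\tau^-(\alpha)+\frac12\ge p$ for all $\alpha\in Y^*$.
   Context: $Y=(0,1]^3$, $Y^*=(-\pi,\pi]^3$; $D$ open with $C^\infty$ boundary, closure in the interior of $Y$. $\mathbf C^1$ isotropic with Lamé constants $\lambda_1,\mu_1$, $C_{ijkl}=\lambda_1\delta_{ij}\delta_{kl}+\mu_1(\delta_{ik}\delta_{jl}+\delta_{il}\delta_{jk})$, $\gamma|\zeta|^2\le\mathbf C^1\zeta:\zeta\le\beta|\zeta|^2$ ($0<\gamma\le\beta$); $\mathcal E(u)=\frac12(\nabla u+\nabla u^T)$. Density $\rho$: periodic, $\rho^1$ on $D$, $\rho^2$ elsewhere, $\rho^1>\rho^2>0$. $H^1_\#(\alpha,Y)^3$: for $\alpha\neq0$, $\alpha$-quasi-periodic ($u(x+p)=e^{i\alpha\cdot p}u(x)$) $H^1_{loc}$ functions; for $\alpha=0$, periodic with $\int_Y\rho u=0$; inner product $\langle u,v\rangle=\int_Y\mathbf C^1\mathcal E(u):\overline{\mathcal E(v)}$. $W^\alpha_1=\{\mathcal E(u)=0\text{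 in }D\}$, $W^\alpha_2=\{\mathcal E(u)=0\text{ in }Y\setminus D\}$, $W^\alpha_3=(W^\alpha_1\oplus W^\alpha_2)^\perp$. $T:W^\alpha_3\to W^\alpha_3$ is defined by $\langle Tu,v\rangle=\frac12\int_{Y\setminus D}\mathbf C^1\mathcal E(u):\overline{\mathcal E(v)}-\frac12\int_D\mathbf C^1\mathcal E(u):\overline{\mathcal E(v)}$ for $u,v\in W^\alpha_3$. *)

theory Defs
  imports "HOL-Analysis.Analysis"
begin

definition Ycell :: "(real^3) set" where
  "Ycell = {x. \<forall>i. 0 < x$i \<and> x$i \<le> 1}"

definition Ystar :: "(real^3) set" where
  "Ystar = {a. \<forall>i. - pi < a$i \<and> a$i \<le> pi}"

definition cpd :: "3 \<Rightarrow> (real^3 \<Rightarrow> real) \<Rightarrow> real^3 \<Rightarrow> real" where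
  "cpd j \<phi> x = frechet_derivative \<phi> (at x) (axis j 1)"

fun Ck :: "nat \<Rightarrow> (real^3 \<Rightarrow> real) \<Rightarrow> bool" where
  "Ck 0 \<phi> = continuous_on UNIV \<phi>"
| "Ck (Suc k) \<phi> = ((\<forall>x. \<phi> differentiable (at x)) \<and> (\<forall>j. Ck k (cpd j \<phi>)))"

definition smooth_fun :: "(real^3 \<Rightarrow> real) \<Rightarrow> bool" where
  "smooth_fun \<phi> \<longleftrightarrow> (\<forall>k. Ck k \<phi>)"

definition test_fun :: "(real^3 \<Rightarrow> real) \<Rightarrow> bool" where
  "test_fun \<phi> \<longleftrightarrow> smooth_fun \<phi> \<and> (\<exists>K. compact K \<and> (\<forall>x. x \<notin> K \<longrightarrow> \<phi> x = 0))"

definition smooth_boundary :: "(real^3) set \<Rightarrow> bool" where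
  "smooth_boundary D \<longleftrightarrow>
     (\<forall>p\<in>frontier D. \<exists>U \<psi>. open U \<and> p \<in> U \<and> smooth_fun \<psi> \<and>
        (\<forall>x\<in>U. frechet_derivative \<psi> (at x) \<noteq> (\<lambda>h. 0)) \<and>
        D \<inter> U = {x\<in>U. \<psi> x < 0})"

definition loc_L1 :: "(real^3 \<Rightarrow> complex) \<Rightarrow> bool" where
  "loc_L1 f \<longleftrightarrow> f \<in> borel_measurable lborel \<and>
     (\<forall>K. compact K \<longrightarrow> set_integrable lborel K f)"

definition loc_L2 :: "(real^3 \<Rightarrow> complex) \<Rightarrow> bool" where
  "loc_L2 f \<longleftrightarrow> f \<in> borel_measurable lborel \<and>
     (\<forall>K. compact K \<longrightarrow> set_integrable lborel K (\<lambda>x. (cmod (f x))\<^sup>2))"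

definition weak_pd :: "3 \<Rightarrow> (real^3 \<Rightarrow> complex) \<Rightarrow> (real^3 \<Rightarrow> complex) \<Rightarrow> bool" where
  "weak_pd j f g \<longleftrightarrow> loc_L1 f \<and> loc_L1 g \<and>
     (\<forall>\<phi>. test_fun \<phi> \<longrightarrow>
        (LINT x|lborel. f x * complex_of_real (cpd j \<phi> x)) =
        - (LINT x|lborel. g x * complex_of_real (\<phi> x)))"

type_synonym vfield = "real^3 \<Rightarrow> complex^3"

definition H1loc :: "vfield \<Rightarrow> bool" where
  "H1loc u \<longleftrightarrow> (\<forall>i. loc_L2 (\<lambda>x. u x $ i) \<and>
      (\<forall>j. \<exists>g. loc_L2 g \<and> weak_pd j (\<lambda>x. u x $ i) g))"

definition wgrad :: "vfield \<Rightarrow> 3 \<Rightarrow> 3 \<Rightarrow> real^3 \<Rightarrow> complex" where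
  "wgrad u i j = (SOME g. loc_L2 g \<and> weak_pd j (\<lambda>x. u x $ i) g)"

definition strain :: "vfield \<Rightarrow> real^3 \<Rightarrow> complex^3^3" where
  "strain u x = (\<chi> i j. (wgrad u i j x + wgrad u j i x) / 2)"

definition kd :: "3 \<Rightarrow> 3 \<Rightarrow> real" where
  "kd i j = (if i = j then 1 else 0)"

definition Cten :: "real \<Rightarrow> real \<Rightarrow> 3 \<Rightarrow> 3 \<Rightarrow> 3 \<Rightarrow> 3 \<Rightarrow> real" where
  "Cten lam mu i j k l = lam * kd i j * kd k l + mu * (kd i k * kd j l + kd i l * kd j k)"

definition contract :: "real \<Rightarrow> real \<Rightarrow> complex^3^3 \<Rightarrow> complex^3^3 \<Rightarrow> complex" where
  "contract lam mu \<zeta> \<eta> =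
     (\<Sum>i\<in>UNIV. \<Sum>j\<in>UNIV. \<Sum>k\<in>UNIV. \<Sum>l\<in>UNIV.
        complex_of_real (Cten lam mu i j k l) * \<zeta>$k$l * cnj (\<eta>$i$j))"

definition lame_elliptic :: "real \<Rightarrow> real \<Rightarrow> bool" where
  "lame_elliptic lam mu \<longleftrightarrow> (\<exists>\<gamma> \<beta>. 0 < \<gamma> \<and> \<gamma> \<le> \<beta> \<and>
     (\<forall>\<zeta>::real^3^3. (\<forall>i j. \<zeta>$i$j = \<zeta>$j$i) \<longrightarrow>
        \<gamma> * (\<Sum>i\<in>UNIV. \<Sum>j\<in>UNIV. (\<zeta>$i$j)\<^sup>2)
          \<le> (\<Sum>i\<in>UNIV. \<Sum>j\<in>UNIV. \<Sum>k\<in>UNIV. \<Sum>l\<in>UNIV. Cten lam mu i j k l * \<zeta>$k$l * \<zeta>$i$j) \<and>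
        (\<Sum>i\<in>UNIV. \<Sum>j\<in>UNIV. \<Sum>k\<in>UNIV. \<Sum>l\<in>UNIV. Cten lam mu i j k l * \<zeta>$k$l * \<zeta>$i$j)
          \<le> \<beta> * (\<Sum>i\<in>UNIV. \<Sum>j\<in>UNIV. (\<zeta>$i$j)\<^sup>2)))"

definition energy :: "real \<Rightarrow> real \<Rightarrow> (real^3) set \<Rightarrow> vfield \<Rightarrow> vfield \<Rightarrow> complex" where
  "energy lam mu A u v = (LINT x:A|lborel. contract lam mu (strain u x) (strain v x))"

definition ip :: "real \<Rightarrow> real \<Rightarrow> vfield \<Rightarrow> vfield \<Rightarrow> complex" where
  "ip lam mu u v = energy lam mu Ycell u v"

definition quasi_periodic :: "real^3 \<Rightarrow> vfield \<Rightarrow> bool" where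
  "quasi_periodic \<alpha> u \<longleftrightarrow>
     (\<forall>x p. (\<forall>i. p$i \<in> \<int>) \<longrightarrow> u (x + p) = exp (\<i> * complex_of_real (\<alpha> \<bullet> p)) *s u x)"

definition rhoY :: "(real^3) set \<Rightarrow> real \<Rightarrow> real \<Rightarrow> real^3 \<Rightarrow> real" where
  "rhoY D r1 r2 x = (if x \<in> D then r1 else r2)"

definition Hsharp :: "(real^3) set \<Rightarrow> real \<Rightarrow> real \<Rightarrow> real^3 \<Rightarrow> vfield set" where
  "Hsharp D r1 r2 \<alpha> = {u. H1loc u \<and> quasi_periodic \<alpha> u \<and>
     (\<alpha> = 0 \<longrightarrow> (\<forall>i. (LINT x:Ycell|lborel. complex_of_real (rhoY D r1 r2 x) * u x $ i) = 0))}"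

definition W1 :: "(real^3) set \<Rightarrow> real \<Rightarrow> real \<Rightarrow> real^3 \<Rightarrow> vfield set" where
  "W1 D r1 r2 \<alpha> = {u \<in> Hsharp D r1 r2 \<alpha>. AE x in lborel. x \<in> D \<longrightarrow> strain u x = 0}"

definition W2 :: "(real^3) set \<Rightarrow> real \<Rightarrow> real \<Rightarrow> real^3 \<Rightarrow> vfield set" where
  "W2 D r1 r2 \<alpha> = {u \<in> Hsharp D r1 r2 \<alpha>. AE x in lborel. x \<in> Ycell - D \<longrightarrow> strain u x = 0}"

definition W3 :: "real \<Rightarrow> real \<Rightarrow> (real^3) set \<Rightarrow> real \<Rightarrow> real \<Rightarrow> real^3 \<Rightarrow> vfield set" where
  "W3 lam mu D r1 r2 \<alpha> = {u \<in> Hsharp D r1 r2 \<alpha>.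
     (\<forall>w\<in>W1 D r1 r2 \<alpha>. ip lam mu u w = 0) \<and> (\<forall>w\<in>W2 D r1 r2 \<alpha>. ip lam mu u w = 0)}"

definition is_T :: "real \<Rightarrow> real \<Rightarrow> (real^3) set \<Rightarrow> real \<Rightarrow> real \<Rightarrow>
    (real^3 \<Rightarrow> vfield \<Rightarrow> vfield) \<Rightarrow> bool" where
  "is_T lam mu D r1 r2 T \<longleftrightarrow> (\<forall>\<alpha>\<in>Ystar. \<forall>u\<in>W3 lam mu D r1 r2 \<alpha>.
     T \<alpha> u \<in> W3 lam mu D r1 r2 \<alpha> \<and>
     (\<forall>v\<in>W3 lam mu D r1 r2 \<alpha>.
        ip lam mu (T \<alpha> u) v = energy lam mu (Ycell - D) u v / 2 - energy lam mu D u v / 2))"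

text \<open>lambda is an eigenvalue of T on W_3^alpha: some nonzero u in W_3^alpha with
  Tu = lambda u in the Hilbert space W_3^alpha, i.e. <Tu,v> = lambda <u,v> for all v in W_3^alpha.\<close>
definition T_eigenvalue :: "real \<Rightarrow> real \<Rightarrow> (real^3) set \<Rightarrow> real \<Rightarrow> real \<Rightarrow>
    (real^3 \<Rightarrow> vfield \<Rightarrow> vfield) \<Rightarrow> real^3 \<Rightarrow> real \<Rightarrow> bool" where
  "T_eigenvalue lam mu D r1 r2 T \<alpha> ev \<longleftrightarrow> (\<exists>u\<in>W3 lam mu D r1 r2 \<alpha>. ip lam mu u u \<noteq> 0 \<and>
     (\<forall>v\<in>W3 lam mu D r1 r2 \<alpha>. ip lam mu (T \<alpha> u) v = complex_of_real ev * ip lam mu u v))"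

end

theory Submission
  imports Defs
begin

text \<open>Since \<open>C\<close> is real and has the pair symmetry \<open>C\<^sub>i\<^sub>j\<^sub>k\<^sub>l = C\<^sub>k\<^sub>l\<^sub>i\<^sub>j\<close>, the energy density
  \<open>C E(u) : conj E(u)\<close> is real, and by ellipticity applied to the real and imaginary parts of the
  symmetric matrix \<open>E(u)\<close> it is nonnegative. Hence for an eigenfunction \<open>u\<close> of \<open>T\<close> with eigenvalue
  \<open>\<tau>\<close>, writing \<open>a\<close> and \<open>b\<close> for the (nonnegative) energies of \<open>u\<close> on \<open>Y - D\<close> and on \<open>D\<close>,
  testing \<open>Tu = \<tau> u\<close> against \<open>u\<close> gives \<open>\<tau> (a + b) = a/2 - b/2\<close>, i.e. \<open>(\<tau> + 1/2)(a + b) = a\<close>.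
  The hypothesis \<open>a \<ge> \<theta> b\<close> then yields \<open>a \<ge> min (1/2) (\<theta>/2) (a + b)\<close>.\<close>

definition elastic_form :: "real \<Rightarrow> real \<Rightarrow> real^3^3 \<Rightarrow> real" where
  "elastic_form lam mu w =
     (\<Sum>i\<in>UNIV. \<Sum>j\<in>UNIV. \<Sum>k\<in>UNIV. \<Sum>l\<in>UNIV. Cten lam mu i j k l * w$k$l * w$i$j)"

definition strain_energy_density :: "real \<Rightarrow> real \<Rightarrow> vfield \<Rightarrow> real^3 \<Rightarrow> real" where
  "strain_energy_density lam mu u x = Re (contract lam mu (strain u x) (strain u x))"

lemma Cten_swap_pairs: "Cten lam mu i j k l = Cten lam mu k l i j"
  unfolding Cten_def kd_def by auto

lemma sum4_swap_pairs:
  fixes h :: "'a::finite \<Rightarrow> 'a \<Rightarrow> 'a \<Rightarrow> 'a \<Rightarrow> 'b::comm_monoid_add"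
  shows "(\<Sum>i\<in>UNIV. \<Sum>j\<in>UNIV. \<Sum>k\<in>UNIV. \<Sum>l\<in>UNIV. h i j k l)
       = (\<Sum>i\<in>UNIV. \<Sum>j\<in>UNIV. \<Sum>k\<in>UNIV. \<Sum>l\<in>UNIV. h k l i j)"
proof -
  have "(\<Sum>i\<in>UNIV. \<Sum>j\<in>UNIV. \<Sum>k\<in>UNIV. \<Sum>l\<in>UNIV. h i j k l)
      = (\<Sum>i\<in>UNIV. \<Sum>k\<in>UNIV. \<Sum>j\<in>UNIV. \<Sum>l\<in>UNIV. h i j k l)"
    by (rule sum.cong[OF refl], rule sum.swap)
  also have "\<dots> = (\<Sum>k\<in>UNIV. \<Sum>i\<in>UNIV. \<Sum>j\<in>UNIV. \<Sum>l\<in>UNIV. h i j k l)"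
    by (rule sum.swap)
  also have "\<dots> = (\<Sum>k\<in>UNIV. \<Sum>i\<in>UNIV. \<Sum>l\<in>UNIV. \<Sum>j\<in>UNIV. h i j k l)"
    by (rule sum.cong[OF refl], rule sum.cong[OF refl], rule sum.swap)
  also have "\<dots> = (\<Sum>k\<in>UNIV. \<Sum>l\<in>UNIV. \<Sum>i\<in>UNIV. \<Sum>j\<in>UNIV. h i j k l)"
    by (rule sum.cong[OF refl], rule sum.swap)
  finally show ?thesis .
qed

lemma Im_contract_self: "Im (contract lam mu z z) = 0"
proof -
  let ?S = "\<lambda>f g. \<Sum>i\<in>UNIV. \<Sum>j\<in>UNIV. \<Sum>k\<in>UNIV. \<Sum>l\<in>UNIV.
              Cten lam mu i j k l * f (z$k$l) * g (z$i$j)"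
  have "Im (contract lam mu z z) = ?S Im Re - ?S Re Im"
    unfolding contract_def by (simp add: sum_subtractf[symmetric] algebra_simps)
  also have "?S Re Im = (\<Sum>i\<in>UNIV. \<Sum>j\<in>UNIV. \<Sum>k\<in>UNIV. \<Sum>l\<in>UNIV.
                           Cten lam mu k l i j * Re (z$i$j) * Im (z$k$l))"
    by (rule sum4_swap_pairs)
  also have "\<dots> = ?S Im Re"
    by (simp add: Cten_swap_pairs[of lam mu _ _ "_::3"] mult_ac)
  finally show ?thesis by simp
qed

lemma Re_contract_self:
  "Re (contract lam mu z z) = elastic_form lam mu (\<chi> i j. Re (z$i$j)) + elastic_form lam mu (\<chi> i j. Im (z$i$j))"
  unfolding contract_def elastic_form_def by (simp add: sum.distrib[symmetric] algebra_simps)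

lemma elastic_form_nonneg:
  assumes "lame_elliptic lam mu" and "\<And>i j. w$i$j = w$j$i"
  shows "0 \<le> elastic_form lam mu w"
proof -
  obtain \<gamma> where "\<gamma> > 0" and "\<gamma> * (\<Sum>i\<in>UNIV. \<Sum>j\<in>UNIV. (w$i$j)\<^sup>2) \<le> elastic_form lam mu w"
    using assms unfolding lame_elliptic_def elastic_form_def by blast
  moreover have "0 \<le> (\<Sum>i\<in>UNIV. \<Sum>j\<in>UNIV. (w$i$j)\<^sup>2)"
    by (intro sum_nonneg) auto
  ultimately show ?thesis by (meson mult_nonneg_nonneg less_imp_le order_trans)
qed

lemma strain_sym: "strain u x $ i $ j = strain u x $ j $ i"
  unfolding strain_def by (simp add: add.commute)

lemma strain_energy_density_nonneg:
  assumes "lame_elliptic lam mu"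
  shows "0 \<le> strain_energy_density lam mu u x"
  unfolding strain_energy_density_def Re_contract_self
  using assms by (intro add_nonneg_nonneg elastic_form_nonneg) (auto simp: strain_sym)

lemma energy_self_eq_integral_density:
  "energy lam mu A u u = of_real (LINT x:A|lborel. strain_energy_density lam mu u x)"
proof -
  have "contract lam mu (strain u x) (strain u x) = of_real (strain_energy_density lam mu u x)" for x
    unfolding strain_energy_density_def by (simp add: complex_eq_iff Im_contract_self)
  then show ?thesis
    unfolding energy_def by (simp add: set_integral_complex_of_real)
qed

lemma set_integral_Diff_add:
  fixes f :: "_ \<Rightarrow> _ :: {banach, second_countable_topology}"
  assumes "set_integrable M A f" and "set_integrable M B f" and "B \<subseteq> A"
  shows "(LINT x:A|M. f x) = (LINT x:A-B|M. f x) + (LINT x:B|M. f x)"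
proof -
  have "indicator (A - B) x *\<^sub>R f x = indicator A x *\<^sub>R f x - indicator B x *\<^sub>R f x" for x
    using \<open>B \<subseteq> A\<close> by (auto simp: indicator_def)
  then have "(LINT x:A-B|M. f x) = (LINT x:A|M. f x) - (LINT x:B|M. f x)"
    using assms(1,2) unfolding set_integrable_def set_lebesgue_integral_def
    by (simp add: Bochner_Integration.integral_diff)
  then show ?thesis by simp
qed

lemma min_half_le_of_energy_balance:
  fixes a b \<theta> ev :: real
  assumes "0 \<le> a" and "0 \<le> b" and "a + b \<noteq> 0" and "\<theta> * b \<le> a"
    and balance: "ev * (a + b) = a / 2 - b / 2"
  shows "min (1/2) (\<theta>/2) \<le> ev + 1/2"
proof -
  have pos: "0 < a + b" using assms(1-3) by linarith
  have "min (1/2) (\<theta>/2) * (a + b) \<le> a"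
  proof (cases "\<theta> \<le> 1")
    case True
    then have "min (1/2) (\<theta>/2) = \<theta> / 2" by simp
    moreover have "\<theta> * a \<le> a" using mult_right_mono[OF True \<open>0 \<le> a\<close>] by simp
    ultimately show ?thesis using \<open>\<theta> * b \<le> a\<close> by (simp add: algebra_simps)
  next
    case False
    then have "min (1/2) (\<theta>/2) = 1 / 2" by simp
    moreover have "b \<le> \<theta> * b" using mult_right_mono[of 1 \<theta> b] False \<open>0 \<le> b\<close> by simp
    ultimately show ?thesis using \<open>\<theta> * b \<le> a\<close> by simp
  qed
  also have "a = ev * (a + b) + (a + b) / 2" unfolding balance by (simp add: field_simps)
  also have "\<dots> = (ev + 1/2) * (a + b)" by (simp add: algebra_simps)
  finally show ?thesis using pos by simp
qed

theorem theorem8p1: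
  fixes D :: "(real^3) set" and lam mu rho1 rho2 \<theta> :: real
    and T :: "real^3 \<Rightarrow> vfield \<Rightarrow> vfield"
  assumes "open D" and "smooth_boundary D" and "closure D \<subseteq> interior Ycell"
    and "lame_elliptic lam mu"
    and "0 < rho2" and "rho2 < rho1"
    and "is_T lam mu D rho1 rho2 T"
    and "\<theta> > 0"
    and "\<forall>\<alpha>\<in>Ystar. \<forall>v\<in>W3 lam mu D rho1 rho2 \<alpha>.
           Re (energy lam mu (Ycell - D) v v) \<ge> \<theta> * Re (energy lam mu D v v)"
  shows "\<forall>\<alpha>\<in>Ystar. \<forall>ev. T_eigenvalue lam mu D rho1 rho2 T \<alpha> ev \<longrightarrow>
           ev + 1/2 \<ge> min (1/2) (\<theta>/2)"
proof (intro ballI allI impI)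
  fix \<alpha> ev
  assume "\<alpha> \<in> Ystar" and "T_eigenvalue lam mu D rho1 rho2 T \<alpha> ev"
  then obtain u where u: "u \<in> W3 lam mu D rho1 rho2 \<alpha>" "ip lam mu u u \<noteq> 0"
    and eigen: "ip lam mu (T \<alpha> u) u = of_real ev * ip lam mu u u"
    unfolding T_eigenvalue_def by blast
  let ?g = "strain_energy_density lam mu u"
  let ?y = "LINT x:Ycell|lborel. ?g x"
  let ?a = "LINT x:Ycell-D|lborel. ?g x" and ?b = "LINT x:D|lborel. ?g x"
  have energy: "energy lam mu A u u = of_real (LINT x:A|lborel. ?g x)" for A
    by (rule energy_self_eq_integral_density)
  have nonneg: "0 \<le> (LINT x:A|lborel. ?g x)" for A
    unfolding set_lebesgue_integral_def using strain_energy_density_nonneg[OF assms(4)]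
    by (intro Bochner_Integration.integral_nonneg) (simp add: indicator_def)
  have "?y \<noteq> 0" using u(2) by (simp add: ip_def energy)
  then have "set_integrable lborel Ycell ?g"
    using not_integrable_integral_eq unfolding set_integrable_def set_lebesgue_integral_def by blast
  moreover have "D \<subseteq> Ycell" using assms(3) closure_subset interior_subset by blast
  moreover have "D \<in> sets lborel" using assms(1) by simp
  ultimately have split: "?y = ?a + ?b"
    by (intro set_integral_Diff_add set_integrable_subset[of lborel Ycell _ D])
  have "of_real ev * ip lam mu u u = energy lam mu (Ycell - D) u u / 2 - energy lam mu D u u / 2"
    using assms(7) \<open>\<alpha> \<in> Ystar\<close> u(1) eigen unfolding is_T_def by simp
  then have "complex_of_real (ev * ?y) = complex_of_real (?a / 2 - ?b / 2)"
    by (simp add: ip_def energy)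
  then have "ev * (?a + ?b) = ?a / 2 - ?b / 2"
    unfolding split of_real_eq_iff by simp
  moreover have "\<theta> * Re (energy lam mu D u u) \<le> Re (energy lam mu (Ycell - D) u u)"
    using assms(9) \<open>\<alpha> \<in> Ystar\<close> u(1) by blast
  then have "\<theta> * ?b \<le> ?a" by (simp add: energy)
  ultimately show "min (1/2) (\<theta>/2) \<le> ev + 1/2"
    using nonneg \<open>?y \<noteq> 0\<close> split by (intro min_half_le_of_energy_balance) simp_all
qed

end
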